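(* Let $q$ be a prime power, $2\le n\le m$, and $0\ne\mathcal{C}\subseteq\mathrm{Mat}$ a rank-metric code. Then $d(\mathcal{C})=n+1-\min\{d\mid \rho_{\mathrm c}(\mathcal{C},J)=\dim(\mathcal{C})/m \text{ for all subspaces } J\subseteq\mathbb{F}_q^n\text{ with }\dim(J)=d\}=m+1-\min\{d\mid\rho_{\mathrm r}(\mathcal{C},K)=\dim(\mathcal{C})/n\text{ for all subspaces }K\subseteq\mathbb{F}_q^m\text{ with }\dim(K)=d\}$.
   Context: $\mathrm{Mat}$ is the $\mathbb{F}_q$-space of $n\times m$ matrices over $\mathbb{F}_q$; a rank-metric code is an $\mathbb{F}_q$-linear subspace, with minimum distance $d(\mathcal{C})=\min\{\mathrm{rk}(M)\mid M\in\mathcal{C},M\ne0\}$. For subspaces $J\subseteq\mathbb{F}_q^n$, $K\subseteq\mathbb{F}_q^m$: $\mathcal{C}(J,\mathrm c)=\{M\in\mathcal{C}\mid\mathrm{colsp}(M)\subseteq J\}$, $\mathcal{C}(K,\mathrm r)=\{M\in\mathcal{C}\mid\mathrm{rowsp}(M)\subseteq K\}$, $\rho_{\mathrm c}(\mathcal{C},J)=(\dim\mathcal{C}-\dim\mathcal{C}(J^\perp,\mathrm c))/m$, $\rho_{\mathrm r}(\mathcal{C},K)=(\dim\mathcal{C}-\dim\mathcal{C}(K^\perp,\mathrm r))/n$, with $\perp$ the orthogonal complement for the standard inner product. *)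

theory Defs
  imports "HOL-Analysis.Analysis"
begin

text \<open>Matrices in Mat (n x m over F_q) are elements of type 'a^'m^'n:
  n = CARD('n) rows, each row in 'a^'m; columns lie in 'a^'n.\<close>

definition mat_scale :: "'a::field \<Rightarrow> 'a^'m^'n \<Rightarrow> 'a^'m^'n" where
  "mat_scale c A = (\<chi> i j. c * A$i$j)"

interpretation matsp: vector_space "mat_scale :: 'a::field \<Rightarrow> 'a^'m^'n \<Rightarrow> 'a^'m^'n"
  by unfold_locales (simp_all add: mat_scale_def vec_eq_iff algebra_simps)

definition dotp :: "'a::field^'k \<Rightarrow> 'a^'k \<Rightarrow> 'a" where
  "dotp x y = (\<Sum>i\<in>UNIV. x$i * y$i)"

definition orth :: "('a::field^'k) set \<Rightarrow> ('a^'k) set" where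
  "orth J = {x. \<forall>y\<in>J. dotp x y = 0}"

definition colsp :: "'a::field^'m^'n \<Rightarrow> ('a^'n) set" where
  "colsp M = vec.span (columns M)"

definition rowsp :: "'a::field^'m^'n \<Rightarrow> ('a^'m) set" where
  "rowsp M = vec.span (rows M)"

definition min_dist :: "('a::field^'m^'n) set \<Rightarrow> nat" where
  "min_dist C = Min {rank M | M. M \<in> C \<and> M \<noteq> 0}"

definition subcode_c :: "('a::field^'m^'n) set \<Rightarrow> ('a^'n) set \<Rightarrow> ('a^'m^'n) set" where
  "subcode_c C J = {M \<in> C. colsp M \<subseteq> J}"

definition subcode_r :: "('a::field^'m^'n) set \<Rightarrow> ('a^'m) set \<Rightarrow> ('a^'m^'n) set" where
  "subcode_r C K = {M \<in> C. rowsp M \<subseteq> K}"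

definition rho_c :: "('a::field^'m^'n) set \<Rightarrow> ('a^'n) set \<Rightarrow> real" where
  "rho_c C J = (real (matsp.dim C) - real (matsp.dim (subcode_c C (orth J)))) / real CARD('m)"

definition rho_r :: "('a::field^'m^'n) set \<Rightarrow> ('a^'m) set \<Rightarrow> real" where
  "rho_r C K = (real (matsp.dim C) - real (matsp.dim (subcode_r C (orth K)))) / real CARD('n)"

end

theory Submission
  imports Defs
begin

(* For a d-dimensional subspace J, rho_c C J = dim C / m says exactly that no nonzero codeword has
   its column space inside the orthogonal complement of J, a space of dimension n - d.  Hence the
   condition holds for all such J as soon as n - d < d(C); conversely, if n - d >= d(C), a codeword
   of minimal rank has column space W with d + dim W <= n, and any d-dimensional J inside the
   orthogonal complement of W violates it.  Row spaces give the second equality in the same way.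
   The only linear algebra needed is dim J^perp = n - dim J, which holds over every field (via
   rank-nullity and row rank = column rank) although J^perp need not be a complement of J. *)

context finite_dimensional_vector_space_pair_1
begin

lemma dim_kernel_plus_dim_range:
  assumes "Vector_Spaces.linear s1 s2 f"
  shows "vs1.dim {x. f x = 0} + vs2.dim (range f) = vs1.dim UNIV"
proof -
  interpret f: Vector_Spaces.linear s1 s2 f by fact
  let ?N = "{x. f x = 0}"
  obtain B where B: "B \<subseteq> ?N" "vs1.independent B" "?N \<subseteq> vs1.span B" "card B = vs1.dim ?N"
    using vs1.basis_exists[of ?N] by metis
  obtain C where C: "B \<subseteq> C" "vs1.independent C" "UNIV \<subseteq> vs1.span C"
    using vs1.maximal_independent_subset_extend[OF subset_UNIV B(2)] by metis
  then have span_C: "vs1.span C = UNIV"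
    by blast
  have "finite C"
    using C(2) vs1.finiteI_independent by blast
  then have card_C: "card C = card B + card (C - B)"
    using C(1) card_Diff_subset[of B C] card_mono[of C B] finite_subset[of B C] by linarith
  have "vs1.dim UNIV = card C"
    using vs1.dim_span_eq_card_independent[OF C(2)] span_C by simp
  define T where "T = vs1.span (C - B)"
  have dim_T: "vs1.dim T = card (C - B)"
    unfolding T_def using C(2) vs1.dim_span_eq_card_independent vs1.independent_mono by blast
  have N: "?N = vs1.span B"
    using B(1,3) f.subspace_kernel vs1.span_minimal by blast
  have sum: "{x + y |x y. x \<in> ?N \<and> y \<in> T} = UNIV"
    using C(1) span_C unfolding N T_def vs1.span_Un[symmetric] by (simp add: Un_absorb1)
  have "vs1.dim (?N \<inter> T) = 0"
    using vs1.dim_sums_Int[OF f.subspace_kernel vs1.subspace_span[of "C - B"]]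
    unfolding sum T_def[symmetric] using B(4) dim_T card_C \<open>vs1.dim UNIV = card C\<close> by simp
  then have NT: "?N \<inter> T \<subseteq> {0}"
    by simp
  have "inj_on f (vs1.span T)"
  proof (rule inj_onI)
    fix x y assume "x \<in> vs1.span T" "y \<in> vs1.span T" "f x = f y"
    then have "x - y \<in> ?N \<inter> T"
      by (simp add: T_def f.diff vs1.span_diff vs1.span_span)
    with NT show "x = y" by auto
  qed
  then have "vs2.dim (f ` T) = vs1.dim T"
    by (rule dim_image_eq[OF assms])
  moreover have "range f = f ` T"
  proof (intro equalityI subsetI)
    fix z assume "z \<in> range f"
    then obtain v where "z = f v" by blast
    moreover obtain a t where "v = a + t" "f a = 0" "t \<in> T"
      using sum by blast
    ultimately show "z \<in> f ` T"
      by (simp add: f.add)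
  qed auto
  ultimately show ?thesis
    using B(4) dim_T card_C \<open>vs1.dim UNIV = card C\<close> by simp
qed

end

lemma dim_rows_le_dim_columns:
  fixes A :: "'a::field^'m^'n"
  shows "vec.dim (rows A) \<le> vec.dim (columns A)"
proof -
  obtain B where B: "B \<subseteq> columns A" "vec.independent B" "columns A \<subseteq> vec.span B"
      "card B = vec.dim (columns A)"
    using vec.basis_exists[of "columns A"] by metis
  have "finite B"
    using B(2) vec.finiteI_independent by blast
  have "\<exists>u. column j A = (\<Sum>v\<in>B. u v *s v)" for j
    using B(3) vec.span_finite[OF \<open>finite B\<close>] by (auto simp: columns_def)
  then obtain u where u: "\<And>j. column j A = (\<Sum>v\<in>B. u j v *s v)"
    by metis
  define R where "R v = (\<chi> j. u j v)" for v
  have row_eq: "row i A = (\<Sum>v\<in>B. (v$i) *s R v)" for i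
  proof -
    have "row i A $ j = column j A $ i" for j
      by (simp add: row_def column_def)
    then show ?thesis
      by (simp add: vec_eq_iff u sum_component R_def mult.commute)
  qed
  have "rows A \<subseteq> vec.span (R ` B)"
  proof
    fix r assume "r \<in> rows A"
    then obtain i where r: "r = row i A"
      by (auto simp: rows_def)
    show "r \<in> vec.span (R ` B)"
      unfolding r row_eq by (intro vec.span_sum vec.span_scale vec.span_base) auto
  qed
  then have "vec.dim (rows A) \<le> card (R ` B)"
    using vec.dim_le_card \<open>finite B\<close> by blast
  also have "\<dots> \<le> card B"
    using \<open>finite B\<close> card_image_le by blast
  finally show ?thesis
    using B(4) by simp
qed

lemma column_rank_def_gen:
  fixes A :: "'a::field^'m^'n"
  shows "rank A = vec.dim (columns A)"
  using dim_rows_le_dim_columns[of A] dim_rows_le_dim_columns[of "transpose A"]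
  unfolding row_rank_def_gen by simp

lemma range_matrix_vector_mult_eq_span_columns:
  fixes A :: "'a::field^'m^'n"
  shows "range ((*v) A) = vec.span (columns A)"
proof
  show "range ((*v) A) \<subseteq> vec.span (columns A)"
    using matrix_vector_mult_in_columnspace_gen by blast
  have "column j A = A *v axis j 1" for j
    by (simp add: vec_eq_iff column_def matrix_vector_mult_def axis_def if_distrib cong: if_cong)
  then have "columns A \<subseteq> range ((*v) A)"
    by (auto simp: columns_def)
  then show "vec.span (columns A) \<subseteq> range ((*v) A)"
    using vec.span_minimal[OF _ vec.subspace_image[OF vec.subspace_UNIV]] by blast
qed

lemma rank_dim_range_gen:
  fixes A :: "'a::field^'m^'n"
  shows "rank A = vec.dim (range ((*v) A))"
  by (simp add: range_matrix_vector_mult_eq_span_columns column_rank_def_gen)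

lemma rank_bound_gen:
  fixes A :: "'a::field^'n^'m"
  shows "rank A \<le> min CARD('m) CARD('n)"
  using dim_subset_UNIV_cart_gen[of "rows A"] dim_subset_UNIV_cart_gen[of "columns A"]
    column_rank_def_gen[of A]
  by (simp add: row_rank_def_gen)

lemma dotp_commute: "dotp x y = dotp y x"
  by (simp add: dotp_def mult.commute)

lemma dotp_add_right: "dotp x (y + z) = dotp x y + dotp x z"
  by (simp add: dotp_def sum.distrib distrib_left)

lemma dotp_scale_right: "dotp x (c *s y) = c * dotp x y"
  by (simp add: dotp_def sum_distrib_left mult.left_commute)

lemma dotp_add_left: "dotp (x + y) z = dotp x z + dotp y z"
  by (simp add: dotp_def sum.distrib distrib_right)

lemma dotp_scale_left: "dotp (c *s x) y = c * dotp x y"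
  by (simp add: dotp_def sum_distrib_left mult.assoc)

lemma dotp_zero_left [simp]: "dotp 0 x = 0"
  by (simp add: dotp_def)

lemma dotp_zero_right [simp]: "dotp x 0 = 0"
  by (simp add: dotp_def)

lemma subspace_orth: "vec.subspace (orth J)"
  unfolding vec.subspace_def orth_def by (simp add: dotp_add_left dotp_scale_left)

lemma orth_span: "orth (vec.span S) = orth S"
proof
  show "orth (vec.span S) \<subseteq> orth S"
    unfolding orth_def using vec.span_superset by blast
  show "orth S \<subseteq> orth (vec.span S)"
  proof
    fix x assume "x \<in> orth S"
    then have "S \<subseteq> {y. dotp x y = 0}"
      by (auto simp: orth_def)
    moreover have "vec.subspace {y. dotp x y = 0}"
      unfolding vec.subspace_def by (simp add: dotp_add_right dotp_scale_right)
    ultimately have "vec.span S \<subseteq> {y. dotp x y = 0}"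
      by (rule vec.span_minimal)
    then show "x \<in> orth (vec.span S)"
      by (auto simp: orth_def)
  qed
qed

lemma subset_orth_swap:
  assumes "J \<subseteq> orth W"
  shows "W \<subseteq> orth J"
  unfolding orth_def
proof (intro subsetI CollectI ballI)
  fix x y assume "x \<in> W" "y \<in> J"
  then have "dotp y x = 0"
    using assms by (auto simp: orth_def)
  then show "dotp x y = 0"
    using dotp_commute[of x y] by simp
qed

lemma kernel_eq_orth_rows:
  fixes A :: "'a::field^'m^'n"
  shows "{x. A *v x = 0} = orth (rows A)"
proof -
  have "A *v x = 0 \<longleftrightarrow> (\<forall>i. dotp x (row i A) = 0)" for x
    by (simp add: vec_eq_iff matrix_vector_mult_def row_def dotp_def mult.commute)
  then show ?thesis
    by (auto simp: orth_def rows_def)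
qed

lemma subspace_eq_span_rows:
  fixes S :: "('a::field^'k) set"
  assumes "vec.subspace S"
  obtains A :: "'a^'k^'k" where "vec.span (rows A) = S"
proof -
  obtain B where B: "B \<subseteq> S" "vec.independent B" "S \<subseteq> vec.span B" "card B = vec.dim S"
    using vec.basis_exists[of S] by metis
  have "finite B"
    using B(2) vec.finiteI_independent by blast
  moreover have "card B \<le> CARD('k)"
    using B(4) dim_subset_UNIV_cart_gen[of S] by simp
  ultimately obtain g :: "'a^'k \<Rightarrow> 'k" where g: "inj_on g B"
    using card_le_inj[of B "UNIV :: 'k set"] by auto
  define A :: "'a^'k^'k" where "A = (\<chi> i. if i \<in> g ` B then the_inv_into B g i else 0)"
  have "B \<subseteq> rows A"
  proof
    fix v assume "v \<in> B"
    then have "v = row (g v) A"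
      using the_inv_into_f_f[OF g] by (simp add: A_def row_def vec_lambda_eta)
    then show "v \<in> rows A"
      by (auto simp: rows_def)
  qed
  moreover have "rows A \<subseteq> S"
    using B(1) the_inv_into_into[OF g] vec.subspace_0[OF assms]
    by (auto simp: rows_def row_def A_def vec_lambda_eta)
  ultimately have "vec.span (rows A) = S"
    using B(3) vec.span_minimal[OF _ assms] vec.span_mono by blast
  then show ?thesis
    by (rule that)
qed

lemma dim_orth:
  fixes S :: "('a::field^'k) set"
  assumes "vec.subspace S"
  shows "vec.dim (orth S) + vec.dim S = CARD('k)"
proof -
  obtain A :: "'a^'k^'k" where A: "vec.span (rows A) = S"
    using subspace_eq_span_rows[OF assms] by blast
  have "orth S = {x. A *v x = 0}"
    by (simp add: kernel_eq_orth_rows orth_span flip: A)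
  moreover have "vec.dim S = vec.dim (range ((*v) A))"
    by (simp add: rank_dim_range_gen[symmetric] row_rank_def_gen flip: A)
  ultimately show ?thesis
    using vec.dim_kernel_plus_dim_range[OF matrix_vector_mul_linear_gen[of A]]
    by (simp only: vec_dim_card)
qed

lemma exists_subspace_with_orth_superset:
  fixes W :: "('a::field^'k) set"
  assumes "vec.subspace W" and "d + vec.dim W \<le> CARD('k)"
  obtains J where "vec.subspace J" "vec.dim J = d" "W \<subseteq> orth J"
proof -
  have "d \<le> vec.dim (orth W)"
    using dim_orth[OF assms(1)] assms(2) by simp
  then obtain J where "vec.subspace J" "J \<subseteq> vec.span (orth W)" "vec.dim J = d"
    by (rule vec.choose_subspace_of_subspace)
  moreover have "vec.span (orth W) = orth W"
    using subspace_orth vec.span_eq_iff by blast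
  ultimately show ?thesis
    using that subset_orth_swap by metis
qed

lemma matsp_dim_eq_0_iff:
  fixes S :: "('a::{finite,field}^'m^'n) set"
  shows "matsp.dim S = 0 \<longleftrightarrow> S \<subseteq> {0}"
proof
  assume "S \<subseteq> {0}"
  then show "matsp.dim S = 0"
    using matsp.dim_le_card[of S "{}"] by simp
next
  assume "matsp.dim S = 0"
  moreover obtain B where "S \<subseteq> matsp.span B" "card B = matsp.dim S"
    using matsp.basis_exists[of S] by metis
  ultimately show "S \<subseteq> {0}"
    by simp
qed

lemma rho_c_eq_iff:
  fixes C :: "('a::{finite,field}^'m^'n) set"
  shows "rho_c C J = real (matsp.dim C) / real CARD('m) \<longleftrightarrow> subcode_c C (orth J) \<subseteq> {0}"
  by (simp add: rho_c_def divide_cancel_right flip: matsp_dim_eq_0_iff)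

lemma rho_r_eq_iff:
  fixes C :: "('a::{finite,field}^'m^'n) set"
  shows "rho_r C K = real (matsp.dim C) / real CARD('n) \<longleftrightarrow> subcode_r C (orth K) \<subseteq> {0}"
  by (simp add: rho_r_def divide_cancel_right flip: matsp_dim_eq_0_iff)

lemma finite_ranks:
  fixes C :: "('a::field^'m^'n) set"
  shows "finite {rank M | M. M \<in> C \<and> M \<noteq> 0}"
proof -
  have "rank M \<le> CARD('n)" for M :: "'a^'m^'n"
    using rank_bound_gen[of M] by simp
  then have "{rank M | M. M \<in> C \<and> M \<noteq> 0} \<subseteq> {..CARD('n)}"
    by auto
  then show ?thesis
    by (rule finite_subset) simp
qed

lemma min_dist_le_rank:
  fixes C :: "('a::field^'m^'n) set"
  assumes "M \<in> C" "M \<noteq> 0"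
  shows "min_dist C \<le> rank M"
  unfolding min_dist_def by (rule Min_le[OF finite_ranks]) (use assms in auto)

lemma min_dist_attained:
  fixes C :: "('a::field^'m^'n) set"
  assumes "\<exists>M\<in>C. M \<noteq> 0"
  obtains M where "M \<in> C" "M \<noteq> 0" "rank M = min_dist C"
proof -
  have "min_dist C \<in> {rank M | M. M \<in> C \<and> M \<noteq> 0}"
    unfolding min_dist_def by (rule Min_in[OF finite_ranks]) (use assms in auto)
  then show ?thesis
    using that by auto
qed

lemma min_dist_bound:
  fixes C :: "('a::field^'m^'n) set"
  assumes "\<exists>M\<in>C. M \<noteq> 0"
  shows "min_dist C \<le> min CARD('n) CARD('m)"
proof -
  obtain M where "M \<in> C" "M \<noteq> 0" "rank M = min_dist C"
    by (rule min_dist_attained[OF assms])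
  then show ?thesis
    using rank_bound_gen[of M] by simp
qed

lemma Least_dim_trivial_subcode_eq:
  fixes C :: "('a::field^'m^'n) set" and sp :: "'a^'m^'n \<Rightarrow> ('a^'k) set"
  assumes nonzero: "\<exists>M\<in>C. M \<noteq> 0"
    and sp: "\<And>M. vec.subspace (sp M)" "\<And>M. vec.dim (sp M) = rank M"
  shows "(LEAST d. \<forall>J::('a^'k) set. vec.subspace J \<and> vec.dim J = d \<longrightarrow>
            {M \<in> C. sp M \<subseteq> orth J} \<subseteq> {0}) = CARD('k) + 1 - min_dist C"
proof (rule Least_equality)
  show "\<forall>J::('a^'k) set. vec.subspace J \<and> vec.dim J = CARD('k) + 1 - min_dist C \<longrightarrow>
          {M \<in> C. sp M \<subseteq> orth J} \<subseteq> {0}"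
  proof (intro allI impI subsetI)
    fix J :: "('a^'k) set" and M
    assume J: "vec.subspace J \<and> vec.dim J = CARD('k) + 1 - min_dist C"
      and M: "M \<in> {M \<in> C. sp M \<subseteq> orth J}"
    show "M \<in> {0}"
    proof (rule ccontr)
      assume "M \<notin> {0}"
      with M have "min_dist C \<le> rank M"
        by (simp add: min_dist_le_rank)
      also have "rank M \<le> vec.dim (orth J)"
        using M vec.dim_subset[of "sp M" "orth J"] by (simp add: sp(2))
      finally have "min_dist C \<le> vec.dim (orth J)" .
      moreover have "vec.dim (orth J) + vec.dim J = CARD('k)"
        using J dim_orth[of J] by simp
      ultimately show False
        using J by arith
    qed
  qed
next
  fix d
  assume d: "\<forall>J::('a^'k) set. vec.subspace J \<and> vec.dim J = d \<longrightarrow>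
              {M \<in> C. sp M \<subseteq> orth J} \<subseteq> {0}"
  obtain M where M: "M \<in> C" "M \<noteq> 0" "rank M = min_dist C"
    by (rule min_dist_attained[OF nonzero])
  show "CARD('k) + 1 - min_dist C \<le> d"
  proof (rule ccontr)
    assume "\<not> CARD('k) + 1 - min_dist C \<le> d"
    then have "d + vec.dim (sp M) \<le> CARD('k)"
      using M(3) sp(2)[of M] by arith
    then obtain J where "vec.subspace J" "vec.dim J = d" "sp M \<subseteq> orth J"
      using exists_subspace_with_orth_superset[OF sp(1)] by metis
    with d have "M \<in> {0}"
      using M(1) by blast
    with M(2) show False
      by simp
  qed
qed

theorem corollary5p3:
  fixes C :: "('a::{finite,field}^'m^'n) set"
  assumes "2 \<le> CARD('n)" and "CARD('n) \<le> CARD('m)"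
    and "matsp.subspace C" and "C \<noteq> {0}"
  shows "int (min_dist C) = int CARD('n) + 1 -
           int (LEAST d. \<forall>J::('a^'n) set. vec.subspace J \<and> vec.dim J = d \<longrightarrow>
                  rho_c C J = real (matsp.dim C) / real CARD('m))
       \<and> int (min_dist C) = int CARD('m) + 1 -
           int (LEAST d. \<forall>K::('a^'m) set. vec.subspace K \<and> vec.dim K = d \<longrightarrow>
                  rho_r C K = real (matsp.dim C) / real CARD('n))"
proof -
  have nonzero: "\<exists>M\<in>C. M \<noteq> 0"
    using assms(3,4) matsp.subspace_0 by blast
  have columns: "(LEAST d. \<forall>J::('a^'n) set. vec.subspace J \<and> vec.dim J = d \<longrightarrow>
                  rho_c C J = real (matsp.dim C) / real CARD('m)) = CARD('n) + 1 - min_dist C"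
    unfolding rho_c_eq_iff subcode_c_def
    by (rule Least_dim_trivial_subcode_eq[OF nonzero])
      (simp_all add: colsp_def column_rank_def_gen)
  have rows: "(LEAST d. \<forall>K::('a^'m) set. vec.subspace K \<and> vec.dim K = d \<longrightarrow>
                  rho_r C K = real (matsp.dim C) / real CARD('n)) = CARD('m) + 1 - min_dist C"
    unfolding rho_r_eq_iff subcode_r_def
    by (rule Least_dim_trivial_subcode_eq[OF nonzero])
      (simp_all add: rowsp_def row_rank_def_gen)
  show ?thesis
    using min_dist_bound[OF nonzero] by (simp add: columns rows of_nat_diff)
qed

end
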